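(* Let $(G,f)$ be any weighted graph. Then $$\max\{\Delta_f(G)+1,\ \Gamma_f(G)\}=\max\{\Delta_f(G)+1,\ W_f(G)\}.$$
   Context: Graphs are finite and undirected; multiple edges are allowed, loops are not. A weighted graph $(G,f)$ is a graph $G$ together with a function $f\colon V(G)\to\mathbb{Z}_{>0}$. For $U\subseteq V(G)$ write $f(U)=\sum_{v\in U}f(v)$, and $f(H)=f(V(H))$ for a subgraph $H$. $E[U]$ denotes the set of edges with both ends in $U$. $\partial U$ denotes the set of edges with exactly one end in $U$. $d_G(v)$ is the degree of $v$, counting multiple edges with multiplicity. The fractional maximum $f$-degree is $\Delta_f^*(G)=\max_{v\in V(G)} d_G(v)/f(v)$. The maximum $f$-degree is $\Delta_f(G)=\lceil \Delta_f^*(G)\rceil$. The fractional $f$-density is $W_f^*(G)=\max\{ |E(H)|/\lfloor \tfrac12 f(H)\rfloor : H\subseteq G \text{ a subgraph},\ |V(H)|\ge 2\}$, with $W_f^*(G)=0$ if $|V(G)|<2$. The $f$-density is $W_f(G)=\lceil W_f^*(G)\rceil$. Define $$\Gamma_f^*(G)=\max\left\{\frac{|E[U]|+|F|}{\lfloor \tfrac12 (f(U)+|F|)\rfloor} : U\subseteq V(G),\ F\subseteq \partial U,\ f(U)+|F|\ge 2\right\},$$ with $\Gamma_f^*(G)=0$ if $G$ has no edge. Set $\Gamma_f(G)=\lceil \Gamma_f^*(G)\rceil$. *)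

theory Defs
  imports Complex_Main "HOL-Library.Multiset"
begin

text \<open>A multigraph without loops: finite vertex set V and a multiset E of edges,
  each edge being a 2-element subset of V (multiplicities model parallel edges).\<close>

definition weighted_graph :: "'a set \<Rightarrow> 'a set multiset \<Rightarrow> ('a \<Rightarrow> nat) \<Rightarrow> bool" where
  "weighted_graph V E f \<longleftrightarrow> finite V \<and> (\<forall>e\<in>#E. e \<subseteq> V \<and> card e = 2) \<and> (\<forall>v\<in>V. f v > 0)"

definition fsum :: "('a \<Rightarrow> nat) \<Rightarrow> 'a set \<Rightarrow> nat" where
  "fsum f U = (\<Sum>v\<in>U. f v)"

definition deg :: "'a set multiset \<Rightarrow> 'a \<Rightarrow> nat" where
  "deg E v = size (filter_mset (\<lambda>e. v \<in> e) E)"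

definition edges_in :: "'a set multiset \<Rightarrow> 'a set \<Rightarrow> 'a set multiset" where
  "edges_in E U = filter_mset (\<lambda>e. e \<subseteq> U) E"

definition boundary :: "'a set multiset \<Rightarrow> 'a set \<Rightarrow> 'a set multiset" where
  "boundary E U = filter_mset (\<lambda>e. card (e \<inter> U) = 1) E"

definition frac_max_fdeg :: "'a set \<Rightarrow> 'a set multiset \<Rightarrow> ('a \<Rightarrow> nat) \<Rightarrow> real" where
  "frac_max_fdeg V E f = (if V = {} then 0 else Max ((\<lambda>v. real (deg E v) / real (f v)) ` V))"

definition max_fdeg :: "'a set \<Rightarrow> 'a set multiset \<Rightarrow> ('a \<Rightarrow> nat) \<Rightarrow> int" where
  "max_fdeg V E f = \<lceil>frac_max_fdeg V E f\<rceil>"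

definition frac_fdensity :: "'a set \<Rightarrow> 'a set multiset \<Rightarrow> ('a \<Rightarrow> nat) \<Rightarrow> real" where
  "frac_fdensity V E f = (if card V < 2 then 0 else
     Max {real (size F) / real (fsum f U div 2) | U F.
            U \<subseteq> V \<and> card U \<ge> 2 \<and> F \<subseteq># E \<and> (\<forall>e\<in>#F. e \<subseteq> U)})"

definition fdensity :: "'a set \<Rightarrow> 'a set multiset \<Rightarrow> ('a \<Rightarrow> nat) \<Rightarrow> int" where
  "fdensity V E f = \<lceil>frac_fdensity V E f\<rceil>"

definition frac_Gamma :: "'a set \<Rightarrow> 'a set multiset \<Rightarrow> ('a \<Rightarrow> nat) \<Rightarrow> real" where
  "frac_Gamma V E f = (if E = {#} then 0 else
     Max {real (size (edges_in E U) + size F) / real ((fsum f U + size F) div 2) | U F.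
            U \<subseteq> V \<and> F \<subseteq># boundary E U \<and> fsum f U + size F \<ge> 2})"

definition Gamma :: "'a set \<Rightarrow> 'a set multiset \<Rightarrow> ('a \<Rightarrow> nat) \<Rightarrow> int" where
  "Gamma V E f = \<lceil>frac_Gamma V E f\<rceil>"

end

theory Submission
  imports Defs
begin

(*
  Write D = \<Delta>_f(G), W = W_f(G) and \<Gamma> = \<Gamma>_f(G).  The theorem follows from the two
  inequalities  \<Gamma> \<le> max (D + 1) W  and  W \<le> \<Gamma>.

  W \<le> \<Gamma>: a subgraph (U, F) with F \<subseteq> E[U] has ratio |F| / \<lfloor>f(U)/2\<rfloor>, which is at most
  the \<Gamma>-ratio of the pair (U, \<emptyset>).

  \<Gamma> \<le> max (D + 1) W: consider a pair (U, F) with F \<subseteq> \<partial>U, m = |E[U]|, a = f(U) and b = |F|.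
  If b = 0, the ratio is a density ratio of U (or 0 when |U| < 2).  If b \<ge> 1, double
  counting the incidences at U gives 2m + b \<le> \<Sum>_{v\<in>U} d(v) \<le> D a, and a small integer
  computation turns this into m + b \<le> (D + 1) \<lfloor>(a + b)/2\<rfloor>.
*)

definition density_ratios :: "'a set \<Rightarrow> 'a set multiset \<Rightarrow> ('a \<Rightarrow> nat) \<Rightarrow> real set" where
  "density_ratios V E f = {real (size F) / real (fsum f U div 2) | U F.
     U \<subseteq> V \<and> card U \<ge> 2 \<and> F \<subseteq># E \<and> (\<forall>e\<in>#F. e \<subseteq> U)}"

definition gamma_ratios :: "'a set \<Rightarrow> 'a set multiset \<Rightarrow> ('a \<Rightarrow> nat) \<Rightarrow> real set" where
  "gamma_ratios V E f = {real (size (edges_in E U) + size F) / real ((fsum f U + size F) div 2) | U F.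
     U \<subseteq> V \<and> F \<subseteq># boundary E U \<and> fsum f U + size F \<ge> 2}"

lemma frac_fdensity_eq_Max: "card V \<ge> 2 \<Longrightarrow> frac_fdensity V E f = Max (density_ratios V E f)"
  by (simp add: frac_fdensity_def density_ratios_def)

lemma frac_Gamma_eq_Max: "E \<noteq> {#} \<Longrightarrow> frac_Gamma V E f = Max (gamma_ratios V E f)"
  by (simp add: frac_Gamma_def gamma_ratios_def)

lemma finite_submultisets: "finite {F. F \<subseteq># (E::'b multiset)}"
proof -
  have "{F. F \<subseteq># E} \<subseteq> (\<Union>n\<in>{..size E}. multisets_of_size (set_mset E) n)"
    by (auto simp: multisets_of_size_def dest: set_mset_mono size_mset_mono)
  then show ?thesis by (rule finite_subset) auto
qed

lemma finite_subgraph_values: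
  assumes "finite V" and "\<And>U F. P U F \<Longrightarrow> U \<subseteq> V \<and> F \<subseteq># E"
  shows "finite {g U F | U F. P U F}"
proof -
  have "{g U F | U F. P U F} \<subseteq> (\<lambda>(U, F). g U F) ` (Pow V \<times> {F. F \<subseteq># E})"
    using assms(2) by force
  moreover have "finite (Pow V \<times> {F. F \<subseteq># E})"
    using assms(1) finite_submultisets by blast
  ultimately show ?thesis by (meson finite_imageI finite_subset)
qed

lemma finite_density_ratios: "finite V \<Longrightarrow> finite (density_ratios V E f)"
  unfolding density_ratios_def by (rule finite_subgraph_values) auto

lemma finite_gamma_ratios:
  assumes "finite V"
  shows "finite (gamma_ratios V E f)"
  unfolding gamma_ratios_def
proof (rule finite_subgraph_values[OF assms])
  fix U F
  assume "U \<subseteq> V \<and> F \<subseteq># boundary E U \<and> 2 \<le> fsum f U + size F"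
  moreover have "boundary E U \<subseteq># E"
    unfolding boundary_def by (rule multiset_filter_subset)
  ultimately show "U \<subseteq> V \<and> F \<subseteq># E"
    by (auto intro: subset_mset.order_trans)
qed

lemma sum_deg_eq_incidences:
  "finite U \<Longrightarrow> (\<Sum>v\<in>U. deg E v) = (\<Sum>e\<in>#E. card (e \<inter> U))"
proof (induction E)
  case empty
  then show ?case by (simp add: deg_def)
next
  case (add e E)
  have "deg (add_mset e E) v = deg E v + (if v \<in> e then 1 else 0)" for v
    by (simp add: deg_def)
  moreover have "(\<Sum>v\<in>U. (if v \<in> e then 1 else 0::nat)) = card (e \<inter> U)"
    using add.prems by (simp add: sum.If_cases Int_commute)
  ultimately show ?case
    using add by (simp add: sum.distrib)
qed

text \<open>An edge inside U has two incidences with U, an edge of \<partial>U exactly one.\<close>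

lemma incidences_lower_bound:
  "\<forall>e\<in>#E. card e = 2 \<Longrightarrow>
     2 * size (edges_in E U) + size (boundary E U) \<le> (\<Sum>e\<in>#E. card (e \<inter> U))"
proof (induction E)
  case empty
  then show ?case by (simp add: edges_in_def boundary_def)
next
  case (add e E)
  have "card e = 2" using add.prems by simp
  then have "2 * (if e \<subseteq> U then 1 else 0) + (if card (e \<inter> U) = 1 then 1 else 0) \<le> card (e \<inter> U)"
    by (cases "e \<subseteq> U") (simp_all add: Int_absorb2)
  then show ?case
    using add by (cases "e \<subseteq> U"; cases "card (e \<inter> U) = 1") (simp_all add: edges_in_def boundary_def)
qed

corollary handshake_bound:
  "finite U \<Longrightarrow> \<forall>e\<in>#E. card e = 2 \<Longrightarrow>
     2 * size (edges_in E U) + size (boundary E U) \<le> (\<Sum>v\<in>U. deg E v)"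
  using incidences_lower_bound sum_deg_eq_incidences by metis

lemma card_le_fsum: "\<forall>v\<in>U. f v > 0 \<Longrightarrow> card U \<le> fsum f U"
proof -
  assume "\<forall>v\<in>U. f v > 0"
  then have "(\<Sum>v\<in>U. 1::nat) \<le> (\<Sum>v\<in>U. f v)"
    by (intro sum_mono) auto
  then show ?thesis by (simp add: fsum_def)
qed

lemma max_fdeg_nonneg: "finite V \<Longrightarrow> 0 \<le> max_fdeg V E f"
proof (cases "V = {}")
  case False
  assume "finite V"
  then obtain v where "v \<in> V" using False by auto
  have "0 \<le> real (deg E v) / real (f v)" by simp
  also have "\<dots> \<le> frac_max_fdeg V E f"
    using \<open>finite V\<close> \<open>v \<in> V\<close> unfolding frac_max_fdeg_def by (auto intro: Max_ge)
  finally show ?thesis by (simp add: max_fdeg_def)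
qed (simp add: max_fdeg_def frac_max_fdeg_def)

lemma deg_le_max_fdeg:
  assumes "weighted_graph V E f" and "v \<in> V"
  shows "int (deg E v) \<le> max_fdeg V E f * int (f v)"
proof -
  have "finite V" and fpos: "real (f v) > 0"
    using assms by (auto simp: weighted_graph_def)
  then have "real (deg E v) / real (f v) \<le> frac_max_fdeg V E f"
    using assms(2) unfolding frac_max_fdeg_def by (auto intro: Max_ge)
  also have "\<dots> \<le> real_of_int (max_fdeg V E f)"
    unfolding max_fdeg_def by (rule le_of_int_ceiling)
  finally have "real (deg E v) \<le> real_of_int (max_fdeg V E f) * real (f v)"
    using fpos by (simp add: divide_le_eq)
  then show ?thesis by (metis of_int_le_iff of_int_mult of_int_of_nat_eq)
qed

lemma sum_deg_le_max_fdeg: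
  assumes "weighted_graph V E f" and "U \<subseteq> V"
  shows "int (\<Sum>v\<in>U. deg E v) \<le> max_fdeg V E f * int (fsum f U)"
proof -
  have "int (\<Sum>v\<in>U. deg E v) = (\<Sum>v\<in>U. int (deg E v))" by simp
  also have "\<dots> \<le> (\<Sum>v\<in>U. max_fdeg V E f * int (f v))"
    using assms by (intro sum_mono deg_le_max_fdeg) auto
  also have "\<dots> = max_fdeg V E f * int (fsum f U)"
    by (simp add: fsum_def sum_distrib_left)
  finally show ?thesis .
qed

lemma edges_in_le_fdensity:
  assumes G: "weighted_graph V E f" and U: "U \<subseteq> V" "card U \<ge> 2"
  shows "int (size (edges_in E U)) \<le> fdensity V E f * int (fsum f U div 2)"
proof -
  have "finite V"
    using G by (simp add: weighted_graph_def)
  have "\<forall>v\<in>U. f v > 0"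
    using G U by (auto simp: weighted_graph_def)
  then have "card U \<le> fsum f U" by (rule card_le_fsum)
  then have half_pos: "real (fsum f U div 2) > 0"
    using U by simp
  have "card U \<le> card V"
    using \<open>finite V\<close> U(1) by (rule card_mono)
  then have "card V \<ge> 2" using U(2) by linarith
  have "real (size (edges_in E U)) / real (fsum f U div 2) \<in> density_ratios V E f"
    unfolding density_ratios_def edges_in_def using U
    by (intro CollectI exI[of _ U] exI[of _ "filter_mset (\<lambda>e. e \<subseteq> U) E"])
      (auto simp: multiset_filter_subset)
  then have "real (size (edges_in E U)) / real (fsum f U div 2) \<le> frac_fdensity V E f"
    using frac_fdensity_eq_Max[OF \<open>card V \<ge> 2\<close>] finite_density_ratios[OF \<open>finite V\<close>]
    by simp
  also have "\<dots> \<le> real_of_int (fdensity V E f)"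
    unfolding fdensity_def by (rule le_of_int_ceiling)
  finally have "real (size (edges_in E U)) \<le> real_of_int (fdensity V E f) * real (fsum f U div 2)"
    using half_pos by (simp add: divide_le_eq)
  then show ?thesis by (metis of_int_le_iff of_int_mult of_int_of_nat_eq)
qed

text \<open>The arithmetic core of the case b \<ge> 1: from 2m + b \<le> D a and k \<ge> D + 1 it
  follows that m + b \<le> k \<lfloor>(a + b)/2\<rfloor>, written with q \<ge> (a + b - 1)/2.\<close>

lemma incidence_count_arith:
  fixes m b a D k q :: int
  assumes "2 * m + b \<le> D * a" "D + 1 \<le> k" "0 \<le> D" "1 \<le> a" "1 \<le> b" "a + b - 1 \<le> 2 * q"
  shows "m + b \<le> k * q"
proof -
  have "D \<le> D * b"
    using assms mult_left_mono[of 1 b D] by simp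
  then have "2 * (m + b) \<le> D * a + D * b - D + (a + b - 1)"
    using assms(1,4) by (smt (verit))
  also have "\<dots> = (D + 1) * (a + b - 1)"
    by (simp add: algebra_simps)
  also have "\<dots> \<le> k * (a + b - 1)"
    using assms by (intro mult_right_mono) auto
  also have "\<dots> \<le> k * (2 * q)"
    using assms by (intro mult_left_mono) auto
  finally show ?thesis by simp
qed

lemma gamma_count_bound:
  assumes G: "weighted_graph V E f" and U: "U \<subseteq> V" and F: "F \<subseteq># boundary E U"
    and two: "fsum f U + size F \<ge> 2"
  shows "int (size (edges_in E U) + size F)
           \<le> max (max_fdeg V E f + 1) (fdensity V E f) * int ((fsum f U + size F) div 2)"
    (is "_ \<le> ?k * _")
proof -
  have finV: "finite V" and Ecard: "\<forall>e\<in>#E. card e = 2"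
    using G by (auto simp: weighted_graph_def)
  have finU: "finite U" using finV U finite_subset by auto
  have D0: "0 \<le> max_fdeg V E f" by (rule max_fdeg_nonneg[OF finV])
  show ?thesis
  proof (cases "F = {#}")
    case True
    show ?thesis
    proof (cases "card U \<ge> 2")
      case True
      then have "int (size (edges_in E U)) \<le> fdensity V E f * int (fsum f U div 2)"
        using edges_in_le_fdensity[OF G U] by blast
      also have "\<dots> \<le> ?k * int (fsum f U div 2)"
        by (intro mult_right_mono) auto
      finally show ?thesis using \<open>F = {#}\<close> by simp
    next
      case False
      have "edges_in E U = {#}"
      proof (rule ccontr)
        assume "edges_in E U \<noteq> {#}"
        then obtain e where "e \<in># edges_in E U" by blast
        then have "e \<in># E" and "e \<subseteq> U" by (simp_all add: edges_in_def)
        then show False using Ecard card_mono[OF finU, of e] False by simp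
      qed
      then show ?thesis using \<open>F = {#}\<close> D0 by simp
    qed
  next
    case False
    then obtain e where "e \<in># F" by blast
    then have "e \<in># boundary E U"
      using F by (rule mset_subset_eqD[rotated])
    then have "card (e \<inter> U) = 1" by (simp add: boundary_def)
    then obtain v where "e \<inter> U = {v}" by (rule card_1_singletonE)
    then have "v \<in> U" by blast
    have "0 < f v" using U \<open>v \<in> U\<close> G by (auto simp: weighted_graph_def)
    moreover have "f v \<le> fsum f U"
      unfolding fsum_def using finU \<open>v \<in> U\<close> by (intro member_le_sum) auto
    ultimately have a1: "1 \<le> fsum f U" by linarith
    have "2 * size (edges_in E U) + size F \<le> (\<Sum>v\<in>U. deg E v)"
      using handshake_bound[OF finU Ecard] size_mset_mono[OF F] by linarith
    then have incidences: "int (2 * size (edges_in E U) + size F) \<le> max_fdeg V E f * int (fsum f U)"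
      using sum_deg_le_max_fdeg[OF G U] by linarith
    have "int (size (edges_in E U)) + int (size F) \<le> ?k * int ((fsum f U + size F) div 2)"
    proof (rule incidence_count_arith)
      show "2 * int (size (edges_in E U)) + int (size F) \<le> max_fdeg V E f * int (fsum f U)"
        using incidences by simp
      show "1 \<le> int (size F)"
        using False by (simp add: Suc_le_eq nonempty_has_size)
      show "int (fsum f U) + int (size F) - 1 \<le> 2 * int ((fsum f U + size F) div 2)"
        by linarith
    qed (use a1 D0 in auto)
    then show ?thesis by simp
  qed
qed

lemma vertex_set_ratio_in_gamma_ratios:
  assumes G: "weighted_graph V E f" and U: "U \<subseteq> V" "card U \<ge> 2"
  shows "real (size (edges_in E U)) / real (fsum f U div 2) \<in> gamma_ratios V E f"
proof -
  have "\<forall>v\<in>U. f v > 0"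
    using G U by (auto simp: weighted_graph_def)
  then have "2 \<le> fsum f U + size ({#} :: 'a set multiset)"
    using card_le_fsum[of U f] U(2) by simp
  then show ?thesis
    unfolding gamma_ratios_def using U(1)
    by (intro CollectI exI[of _ U] exI[of _ "{#}"]) simp
qed

lemma gamma_ratios_nonempty:
  assumes G: "weighted_graph V E f" and "E \<noteq> {#}"
  shows "gamma_ratios V E f \<noteq> {}"
proof -
  obtain e where "e \<in># E" using \<open>E \<noteq> {#}\<close> by blast
  then have "e \<subseteq> V" and "card e = 2" using G by (auto simp: weighted_graph_def)
  then have "real (size (edges_in E e)) / real (fsum f e div 2) \<in> gamma_ratios V E f"
    by (intro vertex_set_ratio_in_gamma_ratios[OF G]) simp_all
  then show ?thesis by blast
qed

lemma Gamma_le: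
  assumes G: "weighted_graph V E f"
  shows "Gamma V E f \<le> max (max_fdeg V E f + 1) (fdensity V E f)"
    (is "_ \<le> ?k")
proof -
  have finV: "finite V" using G by (simp add: weighted_graph_def)
  have k_nonneg: "0 \<le> ?k" using max_fdeg_nonneg[OF finV, of E f] by linarith
  have "frac_Gamma V E f \<le> real_of_int ?k"
  proof (cases "E = {#}")
    case True
    then show ?thesis using k_nonneg by (simp add: frac_Gamma_def)
  next
    case False
    have "x \<le> real_of_int ?k" if x_in: "x \<in> gamma_ratios V E f" for x
    proof -
      obtain U F where UF: "U \<subseteq> V" "F \<subseteq># boundary E U" "fsum f U + size F \<ge> 2"
        and x: "x = real (size (edges_in E U) + size F) / real ((fsum f U + size F) div 2)"
        using x_in unfolding gamma_ratios_def by blast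
      have "real_of_int (int (size (edges_in E U) + size F))
              \<le> real_of_int (?k * int ((fsum f U + size F) div 2))"
        using gamma_count_bound[OF G UF] by (simp only: of_int_le_iff)
      then have "real (size (edges_in E U) + size F) \<le> real_of_int ?k * real ((fsum f U + size F) div 2)"
        by simp
      moreover have "real ((fsum f U + size F) div 2) > 0" using UF(3) by simp
      ultimately show ?thesis unfolding x by (simp add: divide_le_eq)
    qed
    then show ?thesis
      using frac_Gamma_eq_Max[OF False] finite_gamma_ratios[OF finV]
        gamma_ratios_nonempty[OF G False] by simp
  qed
  then show ?thesis unfolding Gamma_def by (simp add: ceiling_le_iff)
qed

text \<open>W_f(G) \<le> \<Gamma>_f(G): a subgraph (U, F) is dominated by the pair (U, \<emptyset>), since F \<subseteq> E[U].\<close>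

lemma fdensity_le_Gamma:
  assumes G: "weighted_graph V E f"
  shows "fdensity V E f \<le> Gamma V E f"
proof -
  have finV: "finite V" using G by (simp add: weighted_graph_def)
  have "frac_fdensity V E f \<le> frac_Gamma V E f"
  proof (cases "card V \<ge> 2")
    case False
    have "E = {#}"
    proof (rule ccontr)
      assume "E \<noteq> {#}"
      then obtain e where "e \<in># E" by blast
      then have "e \<subseteq> V" and "card e = 2" using G by (auto simp: weighted_graph_def)
      then show False using card_mono[OF finV, of e] False by simp
    qed
    then show ?thesis using False by (simp add: frac_fdensity_def frac_Gamma_def)
  next
    case True
    have "x \<le> frac_Gamma V E f" if x_in: "x \<in> density_ratios V E f" for x
    proof -
      obtain U F where U: "U \<subseteq> V" "card U \<ge> 2" and F: "F \<subseteq># E" "\<forall>e\<in>#F. e \<subseteq> U"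
        and x: "x = real (size F) / real (fsum f U div 2)"
        using x_in unfolding density_ratios_def by blast
      show ?thesis
      proof (cases "E = {#}")
        case True
        then show ?thesis using F x by (simp add: frac_Gamma_def)
      next
        case False
        have "filter_mset (\<lambda>e. e \<subseteq> U) F = F"
          using F(2) by (simp add: filter_mset_eq_conv)
        then have "F \<subseteq># edges_in E U"
          using multiset_filter_mono[OF F(1)] unfolding edges_in_def by metis
        then have "x \<le> real (size (edges_in E U)) / real (fsum f U div 2)"
          unfolding x by (simp add: divide_right_mono size_mset_mono)
        also have "\<dots> \<le> frac_Gamma V E f"
          using vertex_set_ratio_in_gamma_ratios[OF G U] frac_Gamma_eq_Max[OF False]
            finite_gamma_ratios[OF finV] by simp
        finally show ?thesis .
      qed
    qed
    moreover have "real (size ({#} :: 'a set multiset)) / real (fsum f V div 2) \<in> density_ratios V E f"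
      unfolding density_ratios_def using True by (intro CollectI exI[of _ V] exI[of _ "{#}"]) auto
    ultimately show ?thesis
      using frac_fdensity_eq_Max[OF True] finite_density_ratios[OF finV]
      by (metis Max_in empty_iff)
  qed
  then show ?thesis unfolding fdensity_def Gamma_def by (rule ceiling_mono)
qed

theorem lemma1:
  fixes V :: "'a set" and E :: "'a set multiset" and f :: "'a \<Rightarrow> nat"
  assumes "weighted_graph V E f"
  shows "max (max_fdeg V E f + 1) (Gamma V E f) = max (max_fdeg V E f + 1) (fdensity V E f)"
  using Gamma_le[OF assms] fdensity_le_Gamma[OF assms] by linarith

end
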